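(* Let $m \ge 1$ and let $\tilde S : [0,1] \to M_m$ be a continuous map with $\tilde S(0) = \tilde S(1)$. Suppose $\det \tilde S(\tau) \neq 0$ for all $\tau \in [0,1]$, and let $\operatorname{wn}(\tilde S) \in \mathbb{Z}$ be the winding number about the origin of the closed curve $\tau \mapsto \det \tilde S(\tau)$ in $\mathbb{C}\setminus\{0\}$. If $m$ does not divide $\operatorname{wn}(\tilde S)$, then there exists $\tau_0 \in [0,1]$ such that $0 \in W(\tilde S(\tau_0))$.
   Context: $M_m$ denotes the set of complex $m\times m$ matrices. For $A \in M_m$, the numerical range is $W(A) = \{x^\dagger A x : x \in \mathbb{C}^m,\ x^\dagger x = 1\}$. The winding number is $\operatorname{wn}(\tilde S) = \varphi(1) - \varphi(0)$, where $2\pi\varphi(\tau)$ is a continuous choice of the polar angle of $\det\tilde S(\tau)$. *)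

theory Defs
  imports "HOL-Analysis.Analysis"
begin

definition numerical_range :: "complex^'m^'m \<Rightarrow> complex set" where
  "numerical_range A =
     {(\<Sum>i\<in>UNIV. cnj (x $ i) * (A *v x) $ i) | x :: complex^'m.
        (\<Sum>i\<in>UNIV. cnj (x $ i) * x $ i) = 1}"

definition angle_lift :: "(real \<Rightarrow> complex) \<Rightarrow> (real \<Rightarrow> real) \<Rightarrow> bool" where
  "angle_lift g \<phi> \<longleftrightarrow> continuous_on {0..1} \<phi> \<and>
     (\<forall>\<tau>\<in>{0..1}. g \<tau> = complex_of_real (cmod (g \<tau>)) * exp (2 * pi * \<i> * complex_of_real (\<phi> \<tau>)))"

text \<open>Winding number of the determinant curve: phi(1) - phi(0) for a continuous lift phi
  (independent of the chosen lift).\<close>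
definition wn :: "(real \<Rightarrow> complex^'m^'m) \<Rightarrow> real" where
  "wn S = (THE w. \<exists>\<phi>. angle_lift (\<lambda>\<tau>. det (S \<tau>)) \<phi> \<and> w = \<phi> 1 - \<phi> 0)"

end

theory Submission
  imports Defs "HOL-Complex_Analysis.Riemann_Mapping"
begin

text \<open>Suppose \<open>0 \<notin> W(S \<tau>)\<close> for all \<open>\<tau>\<close> and fix a diagonal entry \<open>c \<tau> = S \<tau> $ k $ k\<close>, which lies
  in \<open>W(S \<tau>)\<close>. The numerical range is convex (Toeplitz-Hausdorff), so the numerical range of
  \<open>(1 - t) S \<tau> + t c \<tau> I\<close> stays inside \<open>W(S \<tau>)\<close> and these matrices are never singular. Their
  determinants form a homotopy of loops in \<open>\<complex> - {0}\<close> from \<open>det \<circ> S\<close> to \<open>c ^ m\<close>, whence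
  \<open>wn S = m * wn c\<close> is a multiple of \<open>m\<close>.\<close>

definition cinner :: "complex^'n \<Rightarrow> complex^'n \<Rightarrow> complex" where
  "cinner u v = (\<Sum>i\<in>UNIV. cnj (u $ i) * v $ i)"

lemma cinner_add_left: "cinner (u + v) w = cinner u w + cinner v w"
  by (simp add: cinner_def sum.distrib algebra_simps)

lemma cinner_add_right: "cinner u (v + w) = cinner u v + cinner u w"
  by (simp add: cinner_def sum.distrib algebra_simps)

lemma cinner_scale_left: "cinner (c *s u) v = cnj c * cinner u v"
  by (simp add: cinner_def sum_distrib_left algebra_simps)

lemma cinner_scale_right: "cinner u (c *s v) = c * cinner u v"
  by (simp add: cinner_def sum_distrib_left algebra_simps)

lemma cinner_scaleR_right: "cinner u (s *\<^sub>R v) = s *\<^sub>R cinner u v"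
  by (simp add: cinner_def scaleR_sum_right)

lemma cinner_self: "cinner u u = of_real (norm u ^ 2)"
proof -
  have "cinner u u = (\<Sum>i\<in>UNIV. of_real (cmod (u $ i) ^ 2))"
    unfolding cinner_def by (intro sum.cong refl) (metis complex_norm_square mult.commute of_real_power)
  also have "\<dots> = of_real (norm u ^ 2)"
    by (simp add: norm_vec_def L2_set_def sum_nonneg flip: of_real_power of_real_sum)
  finally show ?thesis .
qed

lemma cinner_self_eq_1_iff: "cinner u u = 1 \<longleftrightarrow> norm u = 1"
proof -
  have "cinner u u = 1 \<longleftrightarrow> norm u ^ 2 = 1"
    unfolding cinner_self by (metis of_real_1 of_real_eq_iff)
  then show ?thesis
    using norm_ge_zero[of u] by (auto simp: power2_eq_1_iff)
qed

lemma cinner_scale_quadratic: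
  fixes A :: "complex^'n^'n"
  shows "cinner (c *s u) (A *v (c *s u)) = of_real (cmod c ^ 2) * cinner u (A *v u)"
  unfolding complex_norm_square
  by (simp add: cinner_scale_left cinner_scale_right vector_scalar_commute mult_ac)

lemma scaleR_complex_vec: "s *\<^sub>R v = complex_of_real s *s v"
  for v :: "complex^'n"
  by (simp add: vec_eq_iff) (simp add: scaleR_conv_of_real)

lemma mat_mult_vector: "mat c *v x = c *s x"
  by (simp add: vec_eq_iff matrix_vector_mult_def mat_def if_distrib if_distribR cong: if_cong)

lemma scaleR_matrix_mult_vector:
  fixes A :: "'a::real_algebra_1^'n^'m"
  shows "(s *\<^sub>R A) *v x = s *\<^sub>R (A *v x)"
  by (simp add: vec_eq_iff matrix_vector_mult_def scaleR_sum_right)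

lemma det_mat: "det (mat c :: 'a::comm_ring_1^'n^'n) = c ^ CARD('n)"
  by (simp add: det_diagonal mat_def)

lemma continuous_on_det:
  fixes f :: "'a::topological_space \<Rightarrow> 'b::real_normed_field^'n^'n"
  assumes "\<And>i j. continuous_on X (\<lambda>x. f x $ i $ j)"
  shows "continuous_on X (\<lambda>x. det (f x))"
  unfolding det_def by (intro continuous_intros assms)

lemma numerical_range_eq: "numerical_range A = {cinner x (A *v x) | x. norm x = 1}"
  unfolding numerical_range_def cinner_self_eq_1_iff[symmetric] by (simp add: cinner_def)

lemma numerical_rangeI: "norm x = 1 \<Longrightarrow> cinner x (A *v x) \<in> numerical_range A"
  unfolding numerical_range_eq by blast

lemma rayleigh_quotient_in_numerical_range:
  assumes "x \<noteq> 0"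
  shows "cinner x (A *v x) / of_real (norm x ^ 2) \<in> numerical_range A"
proof -
  define u where "u = (1 / norm x) *\<^sub>R x"
  have "norm u = 1"
    using assms by (simp add: u_def)
  have "cinner u (A *v u) = of_real ((1 / norm x) ^ 2) * cinner x (A *v x)"
    unfolding u_def scaleR_complex_vec cinner_scale_quadratic norm_of_real by simp
  then have "cinner u (A *v u) = cinner x (A *v x) / of_real (norm x ^ 2)"
    by (simp add: field_simps)
  with \<open>norm u = 1\<close> show ?thesis
    by (metis numerical_rangeI)
qed

lemma numerical_range_affine:
  fixes A :: "complex^'n^'n"
  shows "numerical_range (s *\<^sub>R A + mat c) = (\<lambda>w. s *\<^sub>R w + c) ` numerical_range A"
proof -
  have "cinner x ((s *\<^sub>R A + mat c) *v x) = s *\<^sub>R cinner x (A *v x) + c" if "norm x = 1" for x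
    using that by (simp add: matrix_vector_mult_add_rdistrib scaleR_matrix_mult_vector
        mat_mult_vector cinner_add_right cinner_scale_right cinner_scaleR_right cinner_self)
  then show ?thesis
    unfolding numerical_range_eq by auto metis
qed

lemma diagonal_entry_in_numerical_range: "A $ k $ k \<in> numerical_range A"
proof -
  have "norm (axis k (1::complex)) = 1"
    by (simp add: cinner_def axis_def if_distrib if_distribR flip: cinner_self_eq_1_iff cong: if_cong)
  moreover have "cinner (axis k 1) (A *v axis k 1) = A $ k $ k"
    by (simp add: cinner_def axis_def matrix_vector_mult_def if_distrib if_distribR cong: if_cong)
  ultimately show ?thesis
    by (metis numerical_rangeI)
qed

lemma det_nonzero_if_zero_notin_numerical_range:
  assumes "0 \<notin> numerical_range A"
  shows "det A \<noteq> 0"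
proof
  assume "det A = 0"
  then obtain x where "x \<noteq> 0" "A *v x = 0"
    using invertible_det_nz matrix_left_invertible_ker invertible_left_inverse by metis
  then show False
    using assms rayleigh_quotient_in_numerical_range[of x A] by (simp add: cinner_def)
qed

lemma unimodular_rotation_to_real_axis:
  fixes d :: complex
  obtains \<omega> where "cnj \<omega> * \<omega> = 1" "\<omega> * d = of_real (cmod d)"
proof
  show "cnj (cis (- Arg d)) * cis (- Arg d) = 1"
    by (simp add: cis_cnj cis_mult)
  have "cis (- Arg d) * d = of_real (cmod d) * (cis (- Arg d) * cis (Arg d))"
    by (metis rcis_cmod_Arg rcis_def mult.left_commute)
  then show "cis (- Arg d) * d = of_real (cmod d)"
    by (simp add: cis_mult)
qed

lemma scalings_eq_of_opposite_values:
  fixes A :: "complex^'n^'n"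
  assumes "cinner x (A *v x) = a" "a \<noteq> 0" "cinner y (A *v y) = - of_real r * a" "r > 0"
    and "\<alpha> *s x = \<beta> *s y"
  shows "\<alpha> = 0"
proof -
  have "of_real (cmod \<alpha> ^ 2) * a = of_real (cmod \<beta> ^ 2) * (- of_real r * a)"
    using arg_cong[OF assms(5), of "\<lambda>v. cinner v (A *v v)"]
    unfolding cinner_scale_quadratic assms(1,3) .
  then have "of_real (cmod \<alpha> ^ 2 + r * cmod \<beta> ^ 2) * a = 0"
    by (simp add: algebra_simps)
  then have "cmod \<alpha> ^ 2 + r * cmod \<beta> ^ 2 = 0"
    using \<open>a \<noteq> 0\<close> by (metis mult_eq_0_iff of_real_eq_0_iff)
  moreover have "r * cmod \<beta> ^ 2 \<ge> 0"
    using \<open>r > 0\<close> by simp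
  ultimately show "\<alpha> = 0"
    by (smt (verit) zero_less_norm_iff zero_less_power2)
qed

lemma isotropic_vector_of_opposite_values:
  fixes A :: "complex^'n^'n"
  assumes x: "cinner x (A *v x) = a" and "a \<noteq> 0"
    and y: "cinner y (A *v y) = - of_real r * a" and "r > 0"
  obtains z where "z \<noteq> 0" "cinner z (A *v z) = 0"
proof -
  define p where "p = cinner x (A *v y)"
  define q where "q = cinner y (A *v x)"
  obtain \<omega> where \<omega>_unit: "cnj \<omega> * \<omega> = 1" and \<omega>_d: "\<omega> * (cnj a * p - a * cnj q) \<in> \<real>"
    using unimodular_rotation_to_real_axis by (metis Reals_of_real)
  define K where "K = cnj a * (\<omega> * p + cnj \<omega> * q)"
  \<comment> \<open>The phase \<open>\<omega>\<close> makes the cross term \<open>K\<close> real.\<close>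
  have K_real: "Im K = 0"
  proof -
    have "Im K = Im (\<omega> * (cnj a * p - a * cnj q))"
      by (simp add: K_def algebra_simps)
    then show ?thesis
      using \<omega>_d by (simp add: complex_is_Real_iff)
  qed
  define z where "z s = of_real (1 - s) *s x + (of_real s * \<omega>) *s y" for s :: real
  define f where "f s = (1 - s)\<^sup>2 * (cmod a)\<^sup>2 + s * (1 - s) * Re K - s\<^sup>2 * r * (cmod a)\<^sup>2" for s
  have z_expand: "cinner (z s) (A *v z s) =
      of_real ((1 - s)\<^sup>2) * a + of_real (s * (1 - s)) * (\<omega> * p + cnj \<omega> * q) - of_real (s\<^sup>2 * r) * a"
    for s
    unfolding z_def matrix_vector_right_distrib vector_scalar_commute cinner_add_left
      cinner_add_right cinner_scale_left cinner_scale_right x y p_def[symmetric] q_def[symmetric]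
    using \<omega>_unit by (simp add: algebra_simps power2_eq_square)
  have f_eq: "cnj a * cinner (z s) (A *v z s) = of_real (f s)" for s
  proof -
    have "cnj a * cinner (z s) (A *v z s) =
        of_real ((1 - s)\<^sup>2) * (cnj a * a) + of_real (s * (1 - s)) * K - of_real (s\<^sup>2 * r) * (cnj a * a)"
      unfolding z_expand K_def by (simp add: algebra_simps)
    then show ?thesis
      using K_real by (simp add: f_def complex_eq_iff complex_mult_cnj cmod_power2 mult.commute)
  qed
  have "continuous_on {0..1} f"
    unfolding f_def by (intro continuous_intros)
  moreover have "f 1 \<le> 0" "0 \<le> f 0"
    using \<open>r > 0\<close> by (simp_all add: f_def)
  ultimately obtain s where s: "0 \<le> s" "s \<le> 1" "f s = 0"
    using IVT2' by (metis zero_le_one)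
  have "s \<noteq> 1"
    using s \<open>r > 0\<close> \<open>a \<noteq> 0\<close> by (auto simp: f_def)
  have "cinner (z s) (A *v z s) = 0"
    using f_eq[of s] s \<open>a \<noteq> 0\<close> by simp
  moreover have "z s \<noteq> 0"
  proof
    assume "z s = 0"
    then have "of_real (1 - s) *s x = (- (of_real s * \<omega>)) *s y"
      unfolding z_def vector_smult_lneg by (simp add: add_eq_0_iff)
    then have "complex_of_real (1 - s) = 0"
      by (rule scalings_eq_of_opposite_values[OF x \<open>a \<noteq> 0\<close> y \<open>r > 0\<close>])
    then show False
      using \<open>s \<noteq> 1\<close> by simp
  qed
  ultimately show thesis
    using that by blast
qed

lemma convex_numerical_range: "convex (numerical_range A)"
  unfolding convex_alt
proof (intro ballI allI impI)
  fix a b and u :: real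
  assume a: "a \<in> numerical_range A" and b: "b \<in> numerical_range A" and u: "0 \<le> u \<and> u \<le> 1"
  define p where "p = (1 - u) *\<^sub>R a + u *\<^sub>R b"
  show "(1 - u) *\<^sub>R a + u *\<^sub>R b \<in> numerical_range A"
    unfolding p_def[symmetric]
  proof (cases "u = 0 \<or> u = 1 \<or> a = b")
    case True
    then show "p \<in> numerical_range A"
      using a b by (auto simp: p_def algebra_simps)
  next
    case False
    \<comment> \<open>After shifting \<open>A\<close> by \<open>-p\<close>, the values \<open>a - p\<close> and \<open>b - p\<close> point in opposite directions.\<close>
    define B where "B = 1 *\<^sub>R A + mat (- p)"
    have shift: "numerical_range B = (\<lambda>w. w - p) ` numerical_range A"
      unfolding B_def numerical_range_affine by simp
    have "a - p \<in> numerical_range B" "b - p \<in> numerical_range B"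
      using a b unfolding shift by auto
    then obtain x y where x: "cinner x (B *v x) = a - p" and y: "cinner y (B *v y) = b - p"
      unfolding numerical_range_eq by auto
    have "a - p = u *\<^sub>R (a - b)"
      by (simp add: p_def algebra_simps)
    then have "a - p \<noteq> 0"
      using False by simp
    have "b - p = - of_real ((1 - u) / u) * (a - p)"
      using False by (simp add: p_def scaleR_conv_of_real field_simps)
    moreover have "(1 - u) / u > 0"
      using False u by simp
    ultimately obtain z where "z \<noteq> 0" "cinner z (B *v z) = 0"
      using isotropic_vector_of_opposite_values[OF x \<open>a - p \<noteq> 0\<close>] y by metis
    then have "0 \<in> numerical_range B"
      using rayleigh_quotient_in_numerical_range[of z B] by simp
    then show "p \<in> numerical_range A"
      unfolding shift by auto
  qed
qed

lemma det_segment_to_scalar_matrix_nonzero: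
  assumes "0 \<notin> numerical_range A" and "c \<in> numerical_range A" and "0 \<le> t" "t \<le> 1"
  shows "det ((1 - t) *\<^sub>R A + mat (of_real t * c)) \<noteq> 0"
proof (rule det_nonzero_if_zero_notin_numerical_range)
  have "numerical_range ((1 - t) *\<^sub>R A + mat (of_real t * c)) =
      (\<lambda>w. (1 - t) *\<^sub>R w + of_real t * c) ` numerical_range A"
    by (rule numerical_range_affine)
  also have "\<dots> \<subseteq> numerical_range A"
  proof (intro image_subsetI)
    fix w assume "w \<in> numerical_range A"
    then have "(1 - t) *\<^sub>R w + t *\<^sub>R c \<in> numerical_range A"
      using convex_numerical_range[of A] assms(2-4) unfolding convex_alt by blast
    then show "(1 - t) *\<^sub>R w + of_real t * c \<in> numerical_range A"
      by (simp add: scaleR_conv_of_real)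
  qed
  finally show "0 \<notin> numerical_range ((1 - t) *\<^sub>R A + mat (of_real t * c))"
    using assms(1) by blast
qed

lemma angle_lift_diff_unique:
  assumes \<phi>: "angle_lift g \<phi>" and \<psi>: "angle_lift g \<psi>" and nonzero: "\<forall>\<tau>\<in>{0..1}. g \<tau> \<noteq> 0"
  shows "\<phi> 1 - \<phi> 0 = \<psi> 1 - \<psi> 0"
proof -
  define h where "h \<tau> = \<phi> \<tau> - \<psi> \<tau>" for \<tau>
  have h_int: "h \<tau> \<in> \<int>" if \<tau>: "\<tau> \<in> {0..1}" for \<tau>
  proof -
    have "of_real (cmod (g \<tau>)) * exp (2 * pi * \<i> * of_real (\<phi> \<tau>)) =
        of_real (cmod (g \<tau>)) * exp (2 * pi * \<i> * of_real (\<psi> \<tau>))"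
      using \<phi> \<psi> \<tau> unfolding angle_lift_def by metis
    then have "exp (2 * pi * \<i> * of_real (\<phi> \<tau>)) = exp (2 * pi * \<i> * of_real (\<psi> \<tau>))"
      using nonzero \<tau> by simp
    then obtain n :: int where "2 * pi * \<i> * of_real (\<phi> \<tau>) = 2 * pi * \<i> * of_real (\<psi> \<tau>) + of_int (2 * n) * pi * \<i>"
      unfolding exp_eq by blast
    then have "pi * (2 * h \<tau>) = pi * (2 * of_int n)"
      unfolding h_def by (simp add: complex_eq_iff algebra_simps)
    then have "h \<tau> = of_int n"
      by simp
    then show ?thesis
      by simp
  qed
  have "h constant_on {0..1}"
  proof (rule continuous_discrete_range_constant)
    show "continuous_on {0..1} h"
      using \<phi> \<psi> unfolding angle_lift_def h_def by (intro continuous_intros) auto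
    show "\<exists>e>0. \<forall>y. y \<in> {0..1} \<and> h y \<noteq> h x \<longrightarrow> e \<le> norm (h y - h x)" if "x \<in> {0..1}" for x
      using that h_int Ints_nonzero_abs_ge1[of "h _ - h x"] by (intro exI[of _ 1]) auto
  qed simp
  then have "h 1 = h 0"
    unfolding constant_on_def by force
  then show ?thesis
    unfolding h_def by simp
qed

lemma angle_lift_from_winding_number:
  assumes "path g" "0 \<notin> path_image g"
  obtains \<phi> where "angle_lift g \<phi>" "\<phi> 1 - \<phi> 0 = Re (winding_number g 0)"
proof -
  obtain q where q: "path q" "pathfinish q - pathstart q = 2 * of_real pi * \<i> * winding_number g 0"
    "\<And>t. t \<in> {0..1} \<Longrightarrow> g t = 0 + exp (q t)"
    using winding_number_as_continuous_log[OF assms] by blast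
  define \<phi> where "\<phi> t = Im (q t) / (2 * pi)" for t
  have "angle_lift g \<phi>"
    unfolding angle_lift_def
  proof (intro conjI ballI)
    show "continuous_on {0..1} \<phi>"
      using q(1) unfolding path_def \<phi>_def by (intro continuous_intros) auto
    fix t :: real assume t: "t \<in> {0..1}"
    have g: "g t = exp (q t)"
      using q(3)[OF t] by simp
    have angle: "exp (\<i> * of_real (Im (q t))) = exp (2 * pi * \<i> * of_real (\<phi> t))"
      by (simp add: \<phi>_def)
    show "g t = of_real (cmod (g t)) * exp (2 * pi * \<i> * of_real (\<phi> t))"
      unfolding g norm_exp_eq_Re angle[symmetric]
      by (subst exp_eq_polar) (simp add: cis_conv_exp)
  qed
  moreover have "\<phi> 1 - \<phi> 0 = Re (winding_number g 0)"
  proof -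
    have "Im (q 1 - q 0) = 2 * pi * Re (winding_number g 0)"
      using q(2) by (simp add: pathfinish_def pathstart_def)
    then show ?thesis
      by (simp add: \<phi>_def diff_divide_distrib[symmetric])
  qed
  ultimately show thesis
    using that by blast
qed

lemma angle_lift_diff_eq_winding_number:
  assumes "path g" "0 \<notin> path_image g" "angle_lift g \<phi>"
  shows "\<phi> 1 - \<phi> 0 = Re (winding_number g 0)"
proof -
  obtain \<psi> where "angle_lift g \<psi>" "\<psi> 1 - \<psi> 0 = Re (winding_number g 0)"
    using angle_lift_from_winding_number[OF assms(1,2)] by blast
  moreover have "\<forall>\<tau>\<in>{0..1}. g \<tau> \<noteq> 0"
    using assms(2) by (auto simp: path_image_def)
  ultimately show ?thesis
    using angle_lift_diff_unique[OF assms(3)] by simp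
qed

lemma wn_eq_winding_number:
  assumes "path (\<lambda>\<tau>. det (S \<tau>))" "0 \<notin> path_image (\<lambda>\<tau>. det (S \<tau>))"
  shows "wn S = Re (winding_number (\<lambda>\<tau>. det (S \<tau>)) 0)"
proof -
  obtain \<phi> where "angle_lift (\<lambda>\<tau>. det (S \<tau>)) \<phi>"
    using angle_lift_from_winding_number[OF assms] by blast
  then have "(\<exists>\<phi>. angle_lift (\<lambda>\<tau>. det (S \<tau>)) \<phi> \<and> w = \<phi> 1 - \<phi> 0) \<longleftrightarrow>
      w = Re (winding_number (\<lambda>\<tau>. det (S \<tau>)) 0)" for w
    using angle_lift_diff_eq_winding_number[OF assms] by metis
  then show ?thesis
    unfolding wn_def by simp
qed

lemma angle_lift_power:
  assumes "angle_lift g \<phi>"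
  shows "angle_lift (\<lambda>\<tau>. g \<tau> ^ n) (\<lambda>\<tau>. n * \<phi> \<tau>)"
  unfolding angle_lift_def
proof (intro conjI ballI)
  show "continuous_on {0..1} (\<lambda>\<tau>. n * \<phi> \<tau>)"
    using assms unfolding angle_lift_def by (intro continuous_intros) auto
  fix t :: real assume "t \<in> {0..1}"
  then have "g t ^ n = (of_real (cmod (g t)) * exp (2 * pi * \<i> * of_real (\<phi> t))) ^ n"
    using assms unfolding angle_lift_def by metis
  also have "\<dots> = of_real (cmod (g t ^ n)) * exp (of_nat n * (2 * pi * \<i> * of_real (\<phi> t)))"
    by (simp add: power_mult_distrib norm_power exp_of_nat_mult)
  finally show "g t ^ n = of_real (cmod (g t ^ n)) * exp (2 * pi * \<i> * of_real (n * \<phi> t))"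
    by (simp add: mult_ac)
qed

lemma Re_winding_number_power:
  assumes "path g" "0 \<notin> path_image g"
  shows "Re (winding_number (\<lambda>\<tau>. g \<tau> ^ n) 0) = n * Re (winding_number g 0)"
proof -
  obtain \<phi> where \<phi>: "angle_lift g \<phi>" "\<phi> 1 - \<phi> 0 = Re (winding_number g 0)"
    using angle_lift_from_winding_number[OF assms] by blast
  have "path (\<lambda>\<tau>. g \<tau> ^ n)"
    using assms(1) unfolding path_def by (intro continuous_intros)
  moreover have "0 \<notin> path_image (\<lambda>\<tau>. g \<tau> ^ n)"
    using assms(2) by (auto simp: path_image_def)
  ultimately have "n * \<phi> 1 - n * \<phi> 0 = Re (winding_number (\<lambda>\<tau>. g \<tau> ^ n) 0)"
    using angle_lift_diff_eq_winding_number angle_lift_power[OF \<phi>(1)] by blast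
  then show ?thesis
    using \<phi>(2) by (metis right_diff_distrib)
qed

lemma homotopic_loops_det_diagonal_power:
  fixes S :: "real \<Rightarrow> complex^'n^'n"
  assumes S: "continuous_on {0..1} S" "S 0 = S 1"
    and W: "\<forall>\<tau>\<in>{0..1}. 0 \<notin> numerical_range (S \<tau>)"
  shows "homotopic_loops (- {0}) (\<lambda>\<tau>. det (S \<tau>)) (\<lambda>\<tau>. (S \<tau> $ k $ k) ^ CARD('n))"
  unfolding homotopic_loops
proof (intro exI conjI ballI)
  define H where "H p = det ((1 - fst p) *\<^sub>R S (snd p) + mat (of_real (fst p) * S (snd p) $ k $ k))"
    for p :: "real \<times> real"
  have S_snd: "continuous_on ({0..1} \<times> {0..1}) (\<lambda>p. S (snd p))"
    by (rule continuous_on_compose2[OF S(1) continuous_on_snd]) auto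
  show "continuous_on ({0..1} \<times> {0..1}) H"
    unfolding H_def
  proof (rule continuous_on_det)
    fix i j
    show "continuous_on ({0..1} \<times> {0..1}) (\<lambda>p. ((1 - fst p) *\<^sub>R S (snd p) +
        mat (of_real (fst p) * S (snd p) $ k $ k)) $ i $ j)"
      by (cases "i = j") (simp_all add: mat_def, (intro continuous_intros S_snd)+)
  qed
  show "H \<in> {0..1} \<times> {0..1} \<rightarrow> - {0}"
    using W det_segment_to_scalar_matrix_nonzero[OF _ diagonal_entry_in_numerical_range]
    by (force simp: H_def)
  show "H (0, \<tau>) = det (S \<tau>)" for \<tau>
    by (simp add: H_def)
  show "H (1, \<tau>) = (S \<tau> $ k $ k) ^ CARD('n)" for \<tau>
    by (simp add: H_def det_mat)
  show "pathfinish (H \<circ> Pair t) = pathstart (H \<circ> Pair t)" for t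
    by (simp add: H_def pathfinish_def pathstart_def S(2))
qed

theorem mainTheorem1:
  fixes S :: "real \<Rightarrow> complex^'m^'m"
  assumes "continuous_on {0..1} S"
    and "S 0 = S 1"
    and "\<forall>\<tau>\<in>{0..1}. det (S \<tau>) \<noteq> 0"
    and "\<not> (\<exists>k::int. wn S = real_of_int (int CARD('m) * k))"
  shows "\<exists>\<tau>0\<in>{0..1}. 0 \<in> numerical_range (S \<tau>0)"
proof (rule ccontr)
  assume "\<not> ?thesis"
  then have W: "\<forall>\<tau>\<in>{0..1}. 0 \<notin> numerical_range (S \<tau>)"
    by blast
  \<comment> \<open>Any diagonal entry serves as the scalar endpoint of the homotopy.\<close>
  fix k :: 'm
  define c where "c \<tau> = S \<tau> $ k $ k" for \<tau>
  have hom: "homotopic_loops (- {0}) (\<lambda>\<tau>. det (S \<tau>)) (\<lambda>\<tau>. c \<tau> ^ CARD('m))"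
    unfolding c_def by (rule homotopic_loops_det_diagonal_power[OF assms(1,2) W])
  have "path c"
    unfolding path_def c_def by (intro continuous_intros assms(1))
  moreover have "pathfinish c = pathstart c"
    by (simp add: c_def pathfinish_def pathstart_def assms(2))
  moreover have "0 \<notin> path_image c"
  proof -
    have "c \<tau> \<in> numerical_range (S \<tau>)" for \<tau>
      unfolding c_def by (rule diagonal_entry_in_numerical_range)
    then show ?thesis
      using W unfolding path_image_def by (metis imageE)
  qed
  ultimately obtain n :: int where n: "winding_number c 0 = n"
    using integer_winding_number Ints_cases by metis
  have "wn S = Re (winding_number (\<lambda>\<tau>. det (S \<tau>)) 0)"
    using homotopic_loops_imp_path[OF hom] homotopic_loops_imp_subset[OF hom]
    by (intro wn_eq_winding_number) auto
  also have "\<dots> = Re (winding_number (\<lambda>\<tau>. c \<tau> ^ CARD('m)) 0)"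
    using winding_number_homotopic_loops[OF hom] by simp
  also have "\<dots> = CARD('m) * n"
    using Re_winding_number_power[OF \<open>path c\<close> \<open>0 \<notin> path_image c\<close>] n by simp
  finally show False
    using assms(4) by metis
qed

end
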